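(* Let $C\ge 0$. If there is a $C$-competitive mixed online algorithm for an online problem $(\mathcal X,\mathcal R,d)$, then there is a $C$-competitive online algorithm for this problem in each of the three standard models of randomized online algorithms: distributions over deterministic online algorithms, behavioral online algorithms, and distributional online algorithms.
   Context: Online problem: a set $\mathcal X$ of states (configurations), a set $\mathcal R$ of requests, a start state $s^0\in\mathcal X$, a function $d:\mathcal X\times\mathcal X\to[0,\infty)$ with $d(x,x)=0$ and $d(x,z)\le d(x,y)+d(y,z)$, and a cost function $\mathrm{cost}:\mathcal X\times\mathcal R\times\mathcal X\to[0,\infty)$ satisfying $\mathrm{cost}(u,r,v)\le d(u,x)+\mathrm{cost}(x,r,y)+d(y,v)$. For a request sequence $\varrho=r^1\dots r^n$, $\mathrm{cost}_{\mathrm{opt}}(\varrho)$ is the infimum of $\sum_{t=1}^n\mathrm{cost}(x^{t-1},r^t,x^t)$ over all $x^1,\dots,x^n\in\mathcal X$ with $x^0=s^0$. A (randomized) online algorithm $\mathcal A$ is $C$-competitive if there is a constant $K$ such that $E(\mathrm{cost}_{\mathcal A}(\varrho))\le C\cdot\mathrm{cost}_{\mathrm{opt}}(\varrho)+K$ for every finite request sequence $\varrho$. $\Pi$ is the set of finitely supported probability distributions on $\mathcal X$; for $\pi,\pi'\in\Pi$, $\mathrm{cost}(\pi,r,\pi')$ is the minimum of $\sum_{x,y}\gamma(x,y)\mathrm{cost}(x,r,y)$ over probability distributions $\gamma$ on $\mathrm{supp}(\pi)\times\mathrm{supp}(\pi')$ with marginals $\pi,\pi'$. Mixed online algorithm: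 memory states $\mathcal M$, start memory $m^0$; for each full state $k=(\pi,m)\in\Pi\times\mathcal M$ and request $r$, finitely many subsequent full states $k_i=(\pi_i,m_i)$ with weights $\lambda_i>0$ summing to $1$; from $k^0=(s^0,m^0)$, on request $r^t$ it moves to $k^t=k_i$ with probability $\lambda_i$; step cost $\mathrm{cost}(\pi,r,\sum_i\lambda_i\pi_i)$, total cost the sum of step costs. Deterministic online algorithm: chooses $x^t$ as a function of $r^1,\dots,r^t$, cost $\sum_t \mathrm{cost}(x^{t-1},r^t,x^t)$; a distribution over them is a random variable with such values. Behavioral algorithm: from full state $(x^{t-1},m^{t-1})\in\mathcal X\times\mathcal M$ and $r^t$ draws $(x^t,m^t)$ from a finitely supported distribution depending only on $(x^{t-1},m^{t-1},r^t)$, cost $\sum_t\mathrm{cost}(x^{t-1},r^t,x^t)$. Distributional algorithm: deterministic map $(\pi^{t-1},m^{t-1},r^t)\mapsto(\pi^t,m^t)$ on $\Pi\times\mathcal M\times\mathcal R$, cost $\sum_t\mathrm{cost}(\pi^{t-1},r^t,\pi^t)$. *)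

theory Defs
  imports "HOL-Probability.Probability"
begin

text \<open>States have type 'x, requests type 'r. d is the distance function, cost the
  cost function (cost u r v = cost of serving r while moving from u to v).\<close>

definition online_problem :: "('x \<Rightarrow> 'x \<Rightarrow> real) \<Rightarrow> ('x \<Rightarrow> 'r \<Rightarrow> 'x \<Rightarrow> real) \<Rightarrow> bool" where
  "online_problem d cost \<longleftrightarrow>
     (\<forall>x y. 0 \<le> d x y) \<and> (\<forall>x. d x x = 0) \<and> (\<forall>x y z. d x z \<le> d x y + d y z) \<and>
     (\<forall>u r v. 0 \<le> cost u r v) \<and>
     (\<forall>u r v x y. cost u r v \<le> d u x + cost x r y + d y v)"

fun path_cost :: "('x \<Rightarrow> 'r \<Rightarrow> 'x \<Rightarrow> real) \<Rightarrow> 'x \<Rightarrow> 'r list \<Rightarrow> 'x list \<Rightarrow> real" where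
  "path_cost cost x (r # rs) (y # ys) = cost x r y + path_cost cost y rs ys"
| "path_cost cost x _ _ = 0"

definition opt_cost :: "('x \<Rightarrow> 'r \<Rightarrow> 'x \<Rightarrow> real) \<Rightarrow> 'x \<Rightarrow> 'r list \<Rightarrow> real" where
  "opt_cost cost s0 rs = Inf {path_cost cost s0 rs xs | xs. length xs = length rs}"

definition competitive :: "real \<Rightarrow> ('x \<Rightarrow> 'r \<Rightarrow> 'x \<Rightarrow> real) \<Rightarrow> 'x \<Rightarrow> ('r list \<Rightarrow> real) \<Rightarrow> bool" where
  "competitive C cost s0 algcost \<longleftrightarrow> (\<exists>K. \<forall>rs. algcost rs \<le> C * opt_cost cost s0 rs + K)"

definition fin_dist :: "'a pmf \<Rightarrow> bool" where
  "fin_dist p \<longleftrightarrow> finite (set_pmf p)"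

text \<open>cost(pi, r, pi'): optimal coupling cost. Every coupling of pi and pi' is supported
  on supp pi \<times> supp pi'.\<close>
definition pmf_cost :: "('x \<Rightarrow> 'r \<Rightarrow> 'x \<Rightarrow> real) \<Rightarrow> 'x pmf \<Rightarrow> 'r \<Rightarrow> 'x pmf \<Rightarrow> real" where
  "pmf_cost cost \<pi> r \<pi>' = Inf {(\<Sum>xy\<in>set_pmf \<gamma>. pmf \<gamma> xy * cost (fst xy) r (snd xy)) | \<gamma>.
       map_pmf fst \<gamma> = \<pi> \<and> map_pmf snd \<gamma> = \<pi>'}"

text \<open>A mixed algorithm with memory type 'm: for each full state k = (pi, m) with pi finitely
  supported and each request r, a finitely supported distribution (weights lambda_i > 0
  summing to 1) over subsequent full states (pi_i, m_i) with pi_i finitely supported.\<close>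
definition mixed_alg :: "(('x pmf \<times> 'm) \<Rightarrow> 'r \<Rightarrow> ('x pmf \<times> 'm) pmf) \<Rightarrow> bool" where
  "mixed_alg step \<longleftrightarrow> (\<forall>\<pi> m r. fin_dist \<pi> \<longrightarrow>
      finite (set_pmf (step (\<pi>, m) r)) \<and> (\<forall>k\<in>set_pmf (step (\<pi>, m) r). fin_dist (fst k)))"

fun mixed_traj :: "(('x pmf \<times> 'm) \<Rightarrow> 'r \<Rightarrow> ('x pmf \<times> 'm) pmf) \<Rightarrow> ('x pmf \<times> 'm) \<Rightarrow> 'r list
                    \<Rightarrow> ('x pmf \<times> 'm) list pmf" where
  "mixed_traj step k [] = return_pmf []"
| "mixed_traj step k (r # rs) =
     bind_pmf (step k r) (\<lambda>k'. map_pmf (\<lambda>ks. k' # ks) (mixed_traj step k' rs))"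

text \<open>Total cost along a realised sequence of full states: the step cost from k on request r
  is cost(pi, r, sum_i lambda_i pi_i), where the mixture is bind_pmf (step k r) fst.\<close>
fun mixed_path_cost :: "('x \<Rightarrow> 'r \<Rightarrow> 'x \<Rightarrow> real) \<Rightarrow> (('x pmf \<times> 'm) \<Rightarrow> 'r \<Rightarrow> ('x pmf \<times> 'm) pmf)
                         \<Rightarrow> ('x pmf \<times> 'm) \<Rightarrow> 'r list \<Rightarrow> ('x pmf \<times> 'm) list \<Rightarrow> real" where
  "mixed_path_cost cost step k (r # rs) (k' # ks) =
     pmf_cost cost (fst k) r (bind_pmf (step k r) fst) + mixed_path_cost cost step k' rs ks"
| "mixed_path_cost cost step k _ _ = 0"

definition mixed_exp_cost :: "('x \<Rightarrow> 'r \<Rightarrow> 'x \<Rightarrow> real) \<Rightarrow> 'x \<Rightarrow> 'm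
      \<Rightarrow> (('x pmf \<times> 'm) \<Rightarrow> 'r \<Rightarrow> ('x pmf \<times> 'm) pmf) \<Rightarrow> 'r list \<Rightarrow> real" where
  "mixed_exp_cost cost s0 m0 step rs =
     measure_pmf.expectation (mixed_traj step (return_pmf s0, m0) rs)
       (mixed_path_cost cost step (return_pmf s0, m0) rs)"

text \<open>A deterministic algorithm A chooses x^t = A [r^1,...,r^t].\<close>
definition det_cost :: "('x \<Rightarrow> 'r \<Rightarrow> 'x \<Rightarrow> real) \<Rightarrow> 'x \<Rightarrow> ('r list \<Rightarrow> 'x) \<Rightarrow> 'r list \<Rightarrow> real" where
  "det_cost cost s0 A rs = path_cost cost s0 rs (map (\<lambda>t. A (take t rs)) [1..<Suc (length rs)])"

definition random_det_alg :: "('x \<Rightarrow> 'r \<Rightarrow> 'x \<Rightarrow> real) \<Rightarrow> 'x \<Rightarrow> ('r list \<Rightarrow> 'x) measure \<Rightarrow> bool" where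
  "random_det_alg cost s0 M \<longleftrightarrow> prob_space M \<and> (\<forall>rs. integrable M (\<lambda>A. det_cost cost s0 A rs))"

definition random_det_exp_cost :: "('x \<Rightarrow> 'r \<Rightarrow> 'x \<Rightarrow> real) \<Rightarrow> 'x \<Rightarrow> ('r list \<Rightarrow> 'x) measure
      \<Rightarrow> 'r list \<Rightarrow> real" where
  "random_det_exp_cost cost s0 M rs = (\<integral>A. det_cost cost s0 A rs \<partial>M)"

definition behavioral_alg :: "('x \<Rightarrow> 'b \<Rightarrow> 'r \<Rightarrow> ('x \<times> 'b) pmf) \<Rightarrow> bool" where
  "behavioral_alg \<beta> \<longleftrightarrow> (\<forall>x m r. finite (set_pmf (\<beta> x m r)))"

fun behav_traj :: "('x \<Rightarrow> 'b \<Rightarrow> 'r \<Rightarrow> ('x \<times> 'b) pmf) \<Rightarrow> ('x \<times> 'b) \<Rightarrow> 'r list \<Rightarrow> ('x \<times> 'b) list pmf" where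
  "behav_traj \<beta> xm [] = return_pmf []"
| "behav_traj \<beta> xm (r # rs) =
     bind_pmf (\<beta> (fst xm) (snd xm) r) (\<lambda>xm'. map_pmf (\<lambda>ks. xm' # ks) (behav_traj \<beta> xm' rs))"

definition behav_exp_cost :: "('x \<Rightarrow> 'r \<Rightarrow> 'x \<Rightarrow> real) \<Rightarrow> 'x \<Rightarrow> 'b
      \<Rightarrow> ('x \<Rightarrow> 'b \<Rightarrow> 'r \<Rightarrow> ('x \<times> 'b) pmf) \<Rightarrow> 'r list \<Rightarrow> real" where
  "behav_exp_cost cost s0 m0 \<beta> rs =
     measure_pmf.expectation (behav_traj \<beta> (s0, m0) rs) (\<lambda>ks. path_cost cost s0 rs (map fst ks))"

definition distributional_alg :: "('x pmf \<Rightarrow> 'b \<Rightarrow> 'r \<Rightarrow> ('x pmf \<times> 'b)) \<Rightarrow> bool" where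
  "distributional_alg \<delta> \<longleftrightarrow> (\<forall>\<pi> m r. fin_dist \<pi> \<longrightarrow> fin_dist (fst (\<delta> \<pi> m r)))"

fun distr_cost_from :: "('x \<Rightarrow> 'r \<Rightarrow> 'x \<Rightarrow> real) \<Rightarrow> ('x pmf \<Rightarrow> 'b \<Rightarrow> 'r \<Rightarrow> ('x pmf \<times> 'b))
                          \<Rightarrow> ('x pmf \<times> 'b) \<Rightarrow> 'r list \<Rightarrow> real" where
  "distr_cost_from cost \<delta> k [] = 0"
| "distr_cost_from cost \<delta> k (r # rs) =
     pmf_cost cost (fst k) r (fst (\<delta> (fst k) (snd k) r)) + distr_cost_from cost \<delta> (\<delta> (fst k) (snd k) r) rs"

definition distr_cost :: "('x \<Rightarrow> 'r \<Rightarrow> 'x \<Rightarrow> real) \<Rightarrow> 'x \<Rightarrow> 'b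
      \<Rightarrow> ('x pmf \<Rightarrow> 'b \<Rightarrow> 'r \<Rightarrow> ('x pmf \<times> 'b)) \<Rightarrow> 'r list \<Rightarrow> real" where
  "distr_cost cost s0 m0 \<delta> rs = distr_cost_from cost \<delta> (return_pmf s0, m0) rs"

end

theory Submission
  imports Defs
begin

text \<open>The expected cost of a mixed algorithm splits, step by step, into the transport cost from
  the current mixture fst k to the next mixture, averaged over the full states k. The
  distributional algorithm tracks the distribution of the full state and plays its mixture;
  gluing optimal couplings shows that the transport cost is convex, so each step costs at most
  the average. The behavioral algorithm keeps the full state k in memory and a position
  distributed as fst k; it moves along an optimal coupling to the next mixture and then draws
  the next full state conditionally on the new position, which costs exactly the transport cost
  and preserves the invariant. Finally, drawing independently in advance one choice of the
  behavioral algorithm for every time, state and request turns it into a random deterministic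
  algorithm with the same expected cost. Optimal couplings exist because, for finite supports,
  the couplings form a compact set on which the expected cost is continuous.\<close>

abbreviation E :: "'a pmf \<Rightarrow> ('a \<Rightarrow> real) \<Rightarrow> real" where
  "E p f \<equiv> measure_pmf.expectation p f"

lemma E_cong: "(\<And>x. x \<in> set_pmf p \<Longrightarrow> f x = g x) \<Longrightarrow> E p f = E p g"
  by (intro integral_cong_AE) (auto simp: AE_measure_pmf_iff)

lemma E_add: "finite (set_pmf p) \<Longrightarrow> E p (\<lambda>x. f x + g x) = E p f + E p g"
  by (intro Bochner_Integration.integral_add integrable_measure_pmf_finite)

lemma E_const_add: "finite (set_pmf p) \<Longrightarrow> E p (\<lambda>x. c + f x) = c + E p f"
  by (simp add: E_add)

lemma E_nonneg: "(\<And>x. x \<in> set_pmf p \<Longrightarrow> 0 \<le> f x) \<Longrightarrow> 0 \<le> E p f"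
  by (intro integral_nonneg_AE) (auto simp: AE_measure_pmf_iff)

lemma E_bind:
  assumes "finite (set_pmf p)" and "\<And>x. x \<in> set_pmf p \<Longrightarrow> finite (set_pmf (q x))"
  shows "E (bind_pmf p q) f = E p (\<lambda>x. E (q x) f)"
  using assms
  by (simp add: pmf_expectation_bind[of "set_pmf p"] integral_measure_pmf_real mult.commute)

lemma bind_cond_map_pmf_cancel: "bind_pmf (map_pmf f p) (\<lambda>y. cond_pmf p {x. f x = y}) = p"
  by (rule bind_cond_pmf_cancel) (auto simp: vimage_def)

lemma E_total:
  assumes "finite (set_pmf p)"
  shows "E (map_pmf f p) (\<lambda>y. E (cond_pmf p {x. f x = y}) h) = E p h"
proof -
  have "E (map_pmf f p) (\<lambda>y. E (cond_pmf p {x. f x = y}) h)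
      = E (bind_pmf (map_pmf f p) (\<lambda>y. cond_pmf p {x. f x = y})) h"
  proof (intro E_bind[symmetric])
    fix y assume "y \<in> set_pmf (map_pmf f p)"
    then have "set_pmf p \<inter> {x. f x = y} \<noteq> {}" by auto
    then show "finite (set_pmf (cond_pmf p {x. f x = y}))"
      using assms by simp
  qed (use assms in simp)
  then show ?thesis by (simp only: bind_cond_map_pmf_cancel)
qed

lemma pmf_map_eq_sum:
  assumes "finite A" and "set_pmf p \<subseteq> A"
  shows "pmf (map_pmf f p) y = (\<Sum>x\<in>{x\<in>A. f x = y}. pmf p x)"
proof -
  have "pmf (map_pmf f p) y = measure p (f -` {y} \<inter> set_pmf p)"
    by (simp add: pmf_map measure_Int_set_pmf)
  also have "f -` {y} \<inter> set_pmf p = {x\<in>A. f x = y} \<inter> set_pmf p"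
    using assms(2) by auto
  finally show ?thesis
    using assms(1) by (simp add: measure_Int_set_pmf measure_measure_pmf_finite)
qed

section \<open>Couplings and transport cost\<close>

definition couplings :: "'a pmf \<Rightarrow> 'b pmf \<Rightarrow> ('a \<times> 'b) pmf set" where
  "couplings p q = {\<gamma>. map_pmf fst \<gamma> = p \<and> map_pmf snd \<gamma> = q}"

lemma pair_pmf_in_couplings: "pair_pmf p q \<in> couplings p q"
  by (simp add: couplings_def map_fst_pair_pmf map_snd_pair_pmf)

lemma set_pmf_coupling: "\<gamma> \<in> couplings p q \<Longrightarrow> set_pmf \<gamma> \<subseteq> set_pmf p \<times> set_pmf q"
  by (force simp: couplings_def)

lemma finite_set_pmf_coupling:
  "\<gamma> \<in> couplings p q \<Longrightarrow> finite (set_pmf p) \<Longrightarrow> finite (set_pmf q) \<Longrightarrow> finite (set_pmf \<gamma>)"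
  by (rule finite_subset[OF set_pmf_coupling]) auto

lemma bind_pmf_in_couplings:
  "(\<And>x. x \<in> set_pmf b \<Longrightarrow> \<gamma> x \<in> couplings (p x) (q x))
    \<Longrightarrow> bind_pmf b \<gamma> \<in> couplings (bind_pmf b p) (bind_pmf b q)"
  by (auto simp: couplings_def map_bind_pmf intro: bind_pmf_cong)

lemma coupling_of_marginal_sums:
  fixes p :: "'a pmf" and q :: "'b pmf"
  defines "A \<equiv> set_pmf p \<times> set_pmf q"
  assumes fin: "finite (set_pmf p)" "finite (set_pmf q)"
    and g: "\<And>z. 0 \<le> g z" "\<And>z. z \<notin> A \<Longrightarrow> g z = 0"
    and g_fst: "\<And>x. (\<Sum>z\<in>{z\<in>A. fst z = x}. g z) = pmf p x"
    and g_snd: "\<And>y. (\<Sum>z\<in>{z\<in>A. snd z = y}. g z) = pmf q y"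
  shows "\<exists>\<gamma>\<in>couplings p q. pmf \<gamma> = g"
proof -
  have fin_A: "finite A"
    using fin by (simp add: A_def)
  have "sum g A = (\<Sum>x\<in>set_pmf p. \<Sum>z\<in>{z\<in>A. fst z = x}. g z)"
    using fin by (intro sum.group[symmetric]) (auto simp: A_def)
  also have "\<dots> = 1"
    using fin by (simp add: g_fst sum_pmf_eq_1)
  finally have "(\<integral>\<^sup>+z. ennreal (g z) \<partial>count_space UNIV) = 1"
    using fin_A g by (subst nn_integral_count_space'[of A]) auto
  then have pmf_\<gamma>: "pmf (embed_pmf g) = g"
    using g by (simp add: fun_eq_iff pmf_embed_pmf)
  then have supp: "set_pmf (embed_pmf g) \<subseteq> A"
    using g(2) by (metis set_pmf_iff subsetI)
  have "map_pmf fst (embed_pmf g) = p" "map_pmf snd (embed_pmf g) = q"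
    using fin g_fst g_snd by (auto intro!: pmf_eqI simp: pmf_map_eq_sum[OF _ supp] pmf_\<gamma> A_def)
  then show ?thesis
    using pmf_\<gamma> by (auto simp: couplings_def)
qed

lemma marginal_sums_of_coupling:
  fixes p :: "'a pmf" and q :: "'b pmf"
  defines "A \<equiv> set_pmf p \<times> set_pmf q"
  assumes fin: "finite (set_pmf p)" "finite (set_pmf q)" and \<gamma>: "\<gamma> \<in> couplings p q"
  shows "(\<Sum>z\<in>{z\<in>A. fst z = x}. pmf \<gamma> z) = pmf p x"
    and "(\<Sum>z\<in>{z\<in>A. snd z = y}. pmf \<gamma> z) = pmf q y"
proof -
  have "finite A" "set_pmf \<gamma> \<subseteq> A"
    using fin set_pmf_coupling[OF \<gamma>] by (simp_all add: A_def)
  then show "(\<Sum>z\<in>{z\<in>A. fst z = x}. pmf \<gamma> z) = pmf p x"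
    and "(\<Sum>z\<in>{z\<in>A. snd z = y}. pmf \<gamma> z) = pmf q y"
    using \<gamma> by (simp_all add: couplings_def flip: pmf_map_eq_sum)
qed

lemma compact_pmf_couplings:
  fixes p :: "'a pmf" and q :: "'b pmf"
  assumes fin: "finite (set_pmf p)" "finite (set_pmf q)"
  shows "compact (pmf ` couplings p q)"
proof -
  define A where "A = set_pmf p \<times> set_pmf q"
  define T where "T z = (if z \<in> A then {0..1} else {0::real})" for z
  define K where "K = Pi UNIV T
      \<inter> {g. \<forall>x. (\<Sum>z\<in>{z\<in>A. fst z = x}. g z) = pmf p x}
      \<inter> {g. \<forall>y. (\<Sum>z\<in>{z\<in>A. snd z = y}. g z) = pmf q y}"
  have "compactin (product_topology (\<lambda>_. euclidean) UNIV) (PiE UNIV T)"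
    by (subst compactin_PiE) (auto simp: T_def)
  then have "compact (Pi UNIV T)"
    by (simp add: euclidean_product_topology PiE_UNIV_domain)
  moreover have "closed {g. \<forall>x. (\<Sum>z\<in>{z\<in>A. fst z = x}. g z) = pmf p x}"
    "closed {g. \<forall>y. (\<Sum>z\<in>{z\<in>A. snd z = y}. g z) = pmf q y}"
    by (intro closed_Collect_all closed_Collect_eq continuous_on_sum continuous_on_const; simp)+
  ultimately have "compact K"
    unfolding K_def by (intro compact_Int_closed) auto
  moreover have "K = pmf ` couplings p q"
  proof (intro equalityI subsetI)
    fix g assume g: "g \<in> K"
    then have g_T: "g z \<in> T z" for z
      by (auto simp: K_def)
    have "0 \<le> g z" "z \<notin> A \<Longrightarrow> g z = 0" for z
      using g_T[of z] by (auto simp: T_def split: if_splits)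
    then have "\<exists>\<gamma>\<in>couplings p q. pmf \<gamma> = g"
      using fin g by (intro coupling_of_marginal_sums) (auto simp: K_def A_def)
    then show "g \<in> pmf ` couplings p q" by auto
  next
    fix g assume "g \<in> pmf ` couplings p q"
    then obtain \<gamma> where \<gamma>: "\<gamma> \<in> couplings p q" and g: "g = pmf \<gamma>" by blast
    then have "g \<in> Pi UNIV T"
      using set_pmf_coupling[OF \<gamma>] by (auto simp: T_def A_def pmf_le_1 set_pmf_iff)
    then show "g \<in> K"
      using marginal_sums_of_coupling[OF fin \<gamma>] by (simp add: K_def A_def g)
  qed
  ultimately show ?thesis by simp
qed

lemma exists_optimal_coupling:
  fixes c :: "'a \<times> 'b \<Rightarrow> real"
  assumes fin: "finite (set_pmf p)" "finite (set_pmf q)"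
  shows "\<exists>\<gamma>\<in>couplings p q. \<forall>\<gamma>'\<in>couplings p q. E \<gamma> c \<le> E \<gamma>' c"
proof -
  define A where "A = set_pmf p \<times> set_pmf q"
  define \<Phi> where "\<Phi> g = (\<Sum>z\<in>A. g z * c z)" for g :: "'a \<times> 'b \<Rightarrow> real"
  have E_eq: "E \<gamma> c = \<Phi> (pmf \<gamma>)" if "\<gamma> \<in> couplings p q" for \<gamma>
    using fin set_pmf_coupling[OF that]
    by (subst integral_measure_pmf_real[of A]) (auto simp: A_def \<Phi>_def mult.commute)
  have "continuous_on (pmf ` couplings p q) \<Phi>"
    unfolding \<Phi>_def
    by (intro continuous_intros continuous_on_subset[OF continuous_on_product_coordinates]) simp
  then have "\<exists>g\<in>pmf ` couplings p q. \<forall>h\<in>pmf ` couplings p q. \<Phi> g \<le> \<Phi> h"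
    using compact_pmf_couplings[OF fin] pair_pmf_in_couplings by (intro continuous_attains_inf) auto
  then obtain \<gamma> where \<gamma>: "\<gamma> \<in> couplings p q" and min: "\<forall>\<gamma>'\<in>couplings p q. \<Phi> (pmf \<gamma>) \<le> \<Phi> (pmf \<gamma>')"
    by blast
  show ?thesis
  proof (intro bexI ballI)
    fix \<gamma>' assume "\<gamma>' \<in> couplings p q"
    then show "E \<gamma> c \<le> E \<gamma>' c"
      using \<gamma> min by (simp add: E_eq)
  qed (fact \<gamma>)
qed

lemma pmf_cost_eq_INF:
  assumes "finite (set_pmf \<pi>)" "finite (set_pmf \<pi>')"
  shows "pmf_cost cost \<pi> r \<pi>' = (INF \<gamma>\<in>couplings \<pi> \<pi>'. E \<gamma> (\<lambda>z. cost (fst z) r (snd z)))"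
proof -
  have eq: "(\<Sum>z\<in>set_pmf \<gamma>. pmf \<gamma> z * cost (fst z) r (snd z)) = E \<gamma> (\<lambda>z. cost (fst z) r (snd z))"
    if "\<gamma> \<in> couplings \<pi> \<pi>'" for \<gamma>
    using finite_set_pmf_coupling[OF that assms]
    by (subst integral_measure_pmf_real[of "set_pmf \<gamma>"]) (auto simp: mult.commute)
  have "{\<Sum>z\<in>set_pmf \<gamma>. pmf \<gamma> z * cost (fst z) r (snd z) | \<gamma>. \<gamma> \<in> couplings \<pi> \<pi>'}
      = (\<lambda>\<gamma>. E \<gamma> (\<lambda>z. cost (fst z) r (snd z))) ` couplings \<pi> \<pi>'"
    using eq by (auto simp: image_def) metis
  then show ?thesis
    by (simp add: pmf_cost_def couplings_def)
qed

lemma pmf_cost_attained: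
  assumes "finite (set_pmf \<pi>)" "finite (set_pmf \<pi>')"
  shows "\<exists>\<gamma>\<in>couplings \<pi> \<pi>'. E \<gamma> (\<lambda>z. cost (fst z) r (snd z)) = pmf_cost cost \<pi> r \<pi>'
    \<and> (\<forall>\<gamma>'\<in>couplings \<pi> \<pi>'. pmf_cost cost \<pi> r \<pi>' \<le> E \<gamma>' (\<lambda>z. cost (fst z) r (snd z)))"
proof -
  obtain \<gamma> where \<gamma>: "\<gamma> \<in> couplings \<pi> \<pi>'"
    and min: "\<forall>\<gamma>'\<in>couplings \<pi> \<pi>'.
                E \<gamma> (\<lambda>z. cost (fst z) r (snd z)) \<le> E \<gamma>' (\<lambda>z. cost (fst z) r (snd z))"
    using exists_optimal_coupling[OF assms] by blast
  then have "pmf_cost cost \<pi> r \<pi>' = E \<gamma> (\<lambda>z. cost (fst z) r (snd z))"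
    unfolding pmf_cost_eq_INF[OF assms] by (intro cInf_eq_minimum) auto
  with \<gamma> min show ?thesis
    by (intro bexI[of _ \<gamma>]) simp_all
qed

lemma pmf_cost_le_coupling:
  assumes "finite (set_pmf \<pi>)" "finite (set_pmf \<pi>')" and "\<gamma> \<in> couplings \<pi> \<pi>'"
  shows "pmf_cost cost \<pi> r \<pi>' \<le> E \<gamma> (\<lambda>z. cost (fst z) r (snd z))"
  using pmf_cost_attained[OF assms(1,2), of cost r] assms(3) by blast

definition optimal_coupling :: "('x \<Rightarrow> 'r \<Rightarrow> 'x \<Rightarrow> real) \<Rightarrow> 'x pmf \<Rightarrow> 'r \<Rightarrow> 'x pmf \<Rightarrow> ('x \<times> 'x) pmf" where
  "optimal_coupling cost \<pi> r \<pi>' = (SOME \<gamma>. \<gamma> \<in> couplings \<pi> \<pi>'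
     \<and> E \<gamma> (\<lambda>z. cost (fst z) r (snd z)) = pmf_cost cost \<pi> r \<pi>')"

lemma optimal_coupling:
  assumes "finite (set_pmf \<pi>)" "finite (set_pmf \<pi>')"
  shows "optimal_coupling cost \<pi> r \<pi>' \<in> couplings \<pi> \<pi>'"
    and "E (optimal_coupling cost \<pi> r \<pi>') (\<lambda>z. cost (fst z) r (snd z)) = pmf_cost cost \<pi> r \<pi>'"
proof -
  have "\<exists>\<gamma>. \<gamma> \<in> couplings \<pi> \<pi>' \<and> E \<gamma> (\<lambda>z. cost (fst z) r (snd z)) = pmf_cost cost \<pi> r \<pi>'"
    using pmf_cost_attained[OF assms, of cost r] by blast
  from someI_ex[OF this] show "optimal_coupling cost \<pi> r \<pi>' \<in> couplings \<pi> \<pi>'"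
    and "E (optimal_coupling cost \<pi> r \<pi>') (\<lambda>z. cost (fst z) r (snd z)) = pmf_cost cost \<pi> r \<pi>'"
    unfolding optimal_coupling_def by blast+
qed

lemma pmf_cost_bind_le:
  assumes fin_b: "finite (set_pmf b)"
    and fin_p: "\<And>k. k \<in> set_pmf b \<Longrightarrow> finite (set_pmf (p k))"
    and fin_q: "\<And>k. k \<in> set_pmf b \<Longrightarrow> finite (set_pmf (q k))"
  shows "pmf_cost cost (bind_pmf b p) r (bind_pmf b q) \<le> E b (\<lambda>k. pmf_cost cost (p k) r (q k))"
proof -
  define \<gamma> where "\<gamma> k = optimal_coupling cost (p k) r (q k)" for k
  have \<gamma>: "\<gamma> k \<in> couplings (p k) (q k)" if "k \<in> set_pmf b" for k
    unfolding \<gamma>_def using fin_p[OF that] fin_q[OF that] by (rule optimal_coupling(1))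
  have fin_\<gamma>: "finite (set_pmf (\<gamma> k))" if "k \<in> set_pmf b" for k
    using \<gamma>[OF that] fin_p[OF that] fin_q[OF that] by (rule finite_set_pmf_coupling)
  have "pmf_cost cost (bind_pmf b p) r (bind_pmf b q)
      \<le> E (bind_pmf b \<gamma>) (\<lambda>z. cost (fst z) r (snd z))"
  proof (rule pmf_cost_le_coupling)
    show "finite (set_pmf (bind_pmf b p))" "finite (set_pmf (bind_pmf b q))"
      using fin_b fin_p fin_q by simp_all
    show "bind_pmf b \<gamma> \<in> couplings (bind_pmf b p) (bind_pmf b q)"
      using \<gamma> by (rule bind_pmf_in_couplings)
  qed
  also have "\<dots> = E b (\<lambda>k. E (\<gamma> k) (\<lambda>z. cost (fst z) r (snd z)))"
    using fin_b fin_\<gamma> by (rule E_bind)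
  also have "\<dots> = E b (\<lambda>k. pmf_cost cost (p k) r (q k))"
    by (rule E_cong) (simp add: \<gamma>_def optimal_coupling(2) fin_p fin_q)
  finally show ?thesis .
qed

section \<open>Mixed and distributional algorithms\<close>

definition mixed_cost_from :: "('x \<Rightarrow> 'r \<Rightarrow> 'x \<Rightarrow> real) \<Rightarrow> ('x pmf \<times> 'm \<Rightarrow> 'r \<Rightarrow> ('x pmf \<times> 'm) pmf)
    \<Rightarrow> 'x pmf \<times> 'm \<Rightarrow> 'r list \<Rightarrow> real" where
  "mixed_cost_from cost step k rs = E (mixed_traj step k rs) (mixed_path_cost cost step k rs)"

lemma mixed_algD:
  assumes "mixed_alg step" and "fin_dist (fst k)"
  shows "finite (set_pmf (step k r))" and "k' \<in> set_pmf (step k r) \<Longrightarrow> fin_dist (fst k')"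
  using assms unfolding mixed_alg_def by (cases k; force)+

lemma finite_mixed_traj:
  assumes "mixed_alg step" and "fin_dist (fst k)"
  shows "finite (set_pmf (mixed_traj step k rs))"
  using assms(2)
proof (induction rs arbitrary: k)
  case (Cons r rs)
  then show ?case
    using mixed_algD[OF assms(1) Cons.prems] by auto
qed simp

lemma mixed_cost_from_Nil [simp]: "mixed_cost_from cost step k [] = 0"
  by (simp add: mixed_cost_from_def)

lemma mixed_cost_from_Cons:
  assumes "mixed_alg step" and "fin_dist (fst k)"
  shows "mixed_cost_from cost step k (r # rs) = pmf_cost cost (fst k) r (bind_pmf (step k r) fst)
           + E (step k r) (\<lambda>k'. mixed_cost_from cost step k' rs)"
proof -
  note fin_step = mixed_algD[OF assms]
  have fin_traj: "finite (set_pmf (mixed_traj step k' rs))" if "k' \<in> set_pmf (step k r)" for k'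
    using finite_mixed_traj[OF assms(1) fin_step(2)[OF that]] .
  have "mixed_cost_from cost step k (r # rs)
      = E (step k r) (\<lambda>k'. E (mixed_traj step k' rs)
          (\<lambda>ks. pmf_cost cost (fst k) r (bind_pmf (step k r) fst)
                 + mixed_path_cost cost step k' rs ks))"
    unfolding mixed_cost_from_def mixed_traj.simps using fin_step(1) fin_traj
    by (subst E_bind) auto
  also have "\<dots> = E (step k r) (\<lambda>k'. pmf_cost cost (fst k) r (bind_pmf (step k r) fst)
                    + mixed_cost_from cost step k' rs)"
    using fin_traj by (intro E_cong) (simp add: E_const_add mixed_cost_from_def)
  also have "\<dots> = pmf_cost cost (fst k) r (bind_pmf (step k r) fst)
                 + E (step k r) (\<lambda>k'. mixed_cost_from cost step k' rs)"
    using fin_step(1) by (rule E_const_add)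
  finally show ?thesis .
qed

text \<open>The memory b is the law of the mixed algorithm's full state. The guard holds on every
  reachable memory; it only makes the output finitely supported for arbitrary inputs.\<close>
definition distr_of_mixed :: "('x pmf \<times> 'm \<Rightarrow> 'r \<Rightarrow> ('x pmf \<times> 'm) pmf)
    \<Rightarrow> 'x pmf \<Rightarrow> ('x pmf \<times> 'm) pmf \<Rightarrow> 'r \<Rightarrow> 'x pmf \<times> ('x pmf \<times> 'm) pmf" where
  "distr_of_mixed step \<pi> b r =
     (if finite (set_pmf b) \<and> (\<forall>k\<in>set_pmf b. fin_dist (fst k))
      then let b' = bind_pmf b (\<lambda>k. step k r) in (bind_pmf b' fst, b')
      else (\<pi>, b))"

lemma distributional_alg_distr_of_mixed:
  assumes "mixed_alg step"
  shows "distributional_alg (distr_of_mixed step)"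
  using mixed_algD[OF assms]
  by (auto simp: distributional_alg_def distr_of_mixed_def Let_def fin_dist_def)

lemma distr_cost_from_distr_of_mixed_le:
  assumes step: "mixed_alg step"
    and "finite (set_pmf b)" and "\<And>k. k \<in> set_pmf b \<Longrightarrow> fin_dist (fst k)"
  shows "distr_cost_from cost (distr_of_mixed step) (bind_pmf b fst, b) rs
           \<le> E b (\<lambda>k. mixed_cost_from cost step k rs)"
  using assms(2,3)
proof (induction rs arbitrary: b)
  case (Cons r rs)
  note fin_step = mixed_algD[OF step Cons.prems(2)]
  define b' where "b' = bind_pmf b (\<lambda>k. step k r)"
  have fin_b': "finite (set_pmf b')" and fin_dist_b': "\<And>k'. k' \<in> set_pmf b' \<Longrightarrow> fin_dist (fst k')"
    using Cons.prems fin_step by (auto simp: b'_def)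
  have "distr_cost_from cost (distr_of_mixed step) (bind_pmf b fst, b) (r # rs)
      = pmf_cost cost (bind_pmf b fst) r (bind_pmf b (\<lambda>k. bind_pmf (step k r) fst))
        + distr_cost_from cost (distr_of_mixed step) (bind_pmf b' fst, b') rs"
    using Cons.prems by (simp add: distr_of_mixed_def b'_def bind_assoc_pmf)
  also have "\<dots> \<le> E b (\<lambda>k. pmf_cost cost (fst k) r (bind_pmf (step k r) fst))
                 + E b' (\<lambda>k'. mixed_cost_from cost step k' rs)"
  proof (rule add_mono)
    show "pmf_cost cost (bind_pmf b fst) r (bind_pmf b (\<lambda>k. bind_pmf (step k r) fst))
        \<le> E b (\<lambda>k. pmf_cost cost (fst k) r (bind_pmf (step k r) fst))"
      using Cons.prems fin_step by (intro pmf_cost_bind_le) (auto simp: fin_dist_def)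
  qed (rule Cons.IH[OF fin_b' fin_dist_b'])
  also have "E b' (\<lambda>k'. mixed_cost_from cost step k' rs)
      = E b (\<lambda>k. E (step k r) (\<lambda>k'. mixed_cost_from cost step k' rs))"
    unfolding b'_def using Cons.prems fin_step by (intro E_bind) auto
  also have "E b (\<lambda>k. pmf_cost cost (fst k) r (bind_pmf (step k r) fst)) + \<dots>
      = E b (\<lambda>k. mixed_cost_from cost step k (r # rs))"
    using Cons.prems by (simp add: E_add[symmetric] mixed_cost_from_Cons[OF step] cong: E_cong)
  finally show ?case .
qed simp

section \<open>Behavioral algorithms\<close>

definition behav_cost_from :: "('x \<Rightarrow> 'r \<Rightarrow> 'x \<Rightarrow> real) \<Rightarrow> ('x \<Rightarrow> 'b \<Rightarrow> 'r \<Rightarrow> ('x \<times> 'b) pmf)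
    \<Rightarrow> 'x \<times> 'b \<Rightarrow> 'r list \<Rightarrow> real" where
  "behav_cost_from cost \<beta> s rs =
     E (behav_traj \<beta> s rs) (\<lambda>ks. path_cost cost (fst s) rs (map fst ks))"

lemma finite_behav_traj:
  assumes "behavioral_alg \<beta>"
  shows "finite (set_pmf (behav_traj \<beta> s rs))"
  using assms by (induction rs arbitrary: s) (auto simp: behavioral_alg_def)

lemma behav_cost_from_Nil [simp]: "behav_cost_from cost \<beta> s [] = 0"
  by (simp add: behav_cost_from_def)

lemma behav_cost_from_Cons:
  assumes "behavioral_alg \<beta>"
  shows "behav_cost_from cost \<beta> s (r # rs)
           = E (\<beta> (fst s) (snd s) r) (\<lambda>s'. cost (fst s) r (fst s') + behav_cost_from cost \<beta> s' rs)"
proof -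
  have "behav_cost_from cost \<beta> s (r # rs)
      = E (\<beta> (fst s) (snd s) r) (\<lambda>s'. E (behav_traj \<beta> s' rs)
          (\<lambda>ks. cost (fst s) r (fst s') + path_cost cost (fst s') rs (map fst ks)))"
    unfolding behav_cost_from_def behav_traj.simps using assms finite_behav_traj[OF assms]
    by (subst E_bind) (auto simp: behavioral_alg_def)
  also have "\<dots> = E (\<beta> (fst s) (snd s) r)
      (\<lambda>s'. cost (fst s) r (fst s') + behav_cost_from cost \<beta> s' rs)"
    using finite_behav_traj[OF assms] by (simp add: E_const_add behav_cost_from_def)
  finally show ?thesis .
qed

lemma path_cost_nonneg: "(\<And>u r v. 0 \<le> cost u r v) \<Longrightarrow> 0 \<le> path_cost cost x rs xs"
  by (induction cost x rs xs rule: path_cost.induct) (auto intro: add_nonneg_nonneg)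

lemma behav_cost_from_nonneg: "(\<And>u r v. 0 \<le> cost u r v) \<Longrightarrow> 0 \<le> behav_cost_from cost \<beta> s rs"
  unfolding behav_cost_from_def by (intro E_nonneg path_cost_nonneg)

lemma set_cond_pmf_fiber:
  "y \<in> set_pmf (map_pmf f p) \<Longrightarrow> set_pmf (cond_pmf p {x. f x = y}) = set_pmf p \<inter> {x. f x = y}"
  by (intro set_cond_pmf) auto

definition move_coupling :: "('x \<Rightarrow> 'r \<Rightarrow> 'x \<Rightarrow> real) \<Rightarrow> ('x pmf \<times> 'm \<Rightarrow> 'r \<Rightarrow> ('x pmf \<times> 'm) pmf)
    \<Rightarrow> 'x pmf \<times> 'm \<Rightarrow> 'r \<Rightarrow> ('x \<times> 'x) pmf" where
  "move_coupling cost step k r = optimal_coupling cost (fst k) r (bind_pmf (step k r) fst)"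

definition joint_successor :: "('x pmf \<times> 'm \<Rightarrow> 'r \<Rightarrow> ('x pmf \<times> 'm) pmf) \<Rightarrow> 'x pmf \<times> 'm \<Rightarrow> 'r
    \<Rightarrow> ('x \<times> ('x pmf \<times> 'm)) pmf" where
  "joint_successor step k r = bind_pmf (step k r) (\<lambda>k'. map_pmf (\<lambda>x'. (x', k')) (fst k'))"

text \<open>The memory is the point mass at the mixed algorithm's current full state k (the memory
  type is that of the distributional algorithm). From position x the algorithm moves along
  the optimal coupling of fst k with the next mixture, then draws the next full state from
  those consistent with the new position, so that the position stays distributed as fst k.\<close>
definition behav_of_mixed :: "('x \<Rightarrow> 'r \<Rightarrow> 'x \<Rightarrow> real) \<Rightarrow> ('x pmf \<times> 'm \<Rightarrow> 'r \<Rightarrow> ('x pmf \<times> 'm) pmf)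
    \<Rightarrow> 'x \<Rightarrow> ('x pmf \<times> 'm) pmf \<Rightarrow> 'r \<Rightarrow> ('x \<times> ('x pmf \<times> 'm) pmf) pmf" where
  "behav_of_mixed cost step x b r =
     (let k = the_elem (set_pmf b) in
      if fin_dist (fst k) \<and> x \<in> set_pmf (fst k) then
        bind_pmf (cond_pmf (move_coupling cost step k r) {z. fst z = x})
          (\<lambda>z. map_pmf (\<lambda>w. (fst w, return_pmf (snd w)))
                 (cond_pmf (joint_successor step k r) {w. fst w = snd z}))
      else return_pmf (x, b))"

context
  fixes step :: "'x pmf \<times> 'm \<Rightarrow> 'r \<Rightarrow> ('x pmf \<times> 'm) pmf"
  assumes step: "mixed_alg step"
begin

lemma move_coupling:
  assumes "fin_dist (fst k)"
  shows "move_coupling cost step k r \<in> couplings (fst k) (bind_pmf (step k r) fst)"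
    and "E (move_coupling cost step k r) (\<lambda>z. cost (fst z) r (snd z))
           = pmf_cost cost (fst k) r (bind_pmf (step k r) fst)"
    and "finite (set_pmf (move_coupling cost step k r))"
proof -
  have fin: "finite (set_pmf (fst k))" "finite (set_pmf (bind_pmf (step k r) fst))"
    using assms mixed_algD[OF step assms] by (auto simp: fin_dist_def)
  show "move_coupling cost step k r \<in> couplings (fst k) (bind_pmf (step k r) fst)"
    and "E (move_coupling cost step k r) (\<lambda>z. cost (fst z) r (snd z))
           = pmf_cost cost (fst k) r (bind_pmf (step k r) fst)"
    unfolding move_coupling_def using fin by (rule optimal_coupling)+
  then show "finite (set_pmf (move_coupling cost step k r))"
    using fin by (intro finite_set_pmf_coupling)
qed

lemma map_fst_joint_successor: "map_pmf fst (joint_successor step k r) = bind_pmf (step k r) fst"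
  by (simp add: joint_successor_def map_bind_pmf map_pmf_comp)

lemma finite_joint_successor: "fin_dist (fst k) \<Longrightarrow> finite (set_pmf (joint_successor step k r))"
  using mixed_algD[OF step] by (auto simp: joint_successor_def fin_dist_def)

lemma E_joint_successor:
  assumes "fin_dist (fst k)"
  shows "E (joint_successor step k r) g = E (step k r) (\<lambda>k'. E (fst k') (\<lambda>x'. g (x', k')))"
  unfolding joint_successor_def using mixed_algD[OF step assms]
  by (subst E_bind) (auto simp: fin_dist_def)

lemma move_coupling_snd:
  assumes "fin_dist (fst k)" and "z \<in> set_pmf (move_coupling cost step k r)"
  shows "snd z \<in> set_pmf (map_pmf fst (joint_successor step k r))"
  unfolding map_fst_joint_successor
  using subsetD[OF set_pmf_coupling[OF move_coupling(1)[OF assms(1), of cost r]] assms(2)]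
  by (auto simp: mem_Times_iff)

lemma behavioral_alg_behav_of_mixed: "behavioral_alg (behav_of_mixed cost step)"
  unfolding behavioral_alg_def
proof (intro allI)
  fix x and b :: "('x pmf \<times> 'm) pmf" and r
  define k where "k = the_elem (set_pmf b)"
  show "finite (set_pmf (behav_of_mixed cost step x b r))"
  proof (cases "fin_dist (fst k) \<and> x \<in> set_pmf (fst k)")
    case True
    then have fin_k: "fin_dist (fst k)" by simp
    have "x \<in> set_pmf (map_pmf fst (move_coupling cost step k r))"
      using True move_coupling(1)[OF fin_k] by (simp add: couplings_def)
    then show ?thesis
      using True move_coupling(3)[OF fin_k] finite_joint_successor[OF fin_k]
        move_coupling_snd[OF fin_k]
      by (auto simp: behav_of_mixed_def k_def[symmetric] set_cond_pmf_fiber)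
  next
    case False
    then show ?thesis by (auto simp: behav_of_mixed_def k_def[symmetric])
  qed
qed

lemma behav_cost_from_behav_of_mixed_Cons:
  assumes k: "fin_dist (fst k)" and x: "x \<in> set_pmf (fst k)"
  shows "behav_cost_from cost (behav_of_mixed cost step) (x, return_pmf k) (r # rs)
    = E (cond_pmf (move_coupling cost step k r) {z. fst z = x})
        (\<lambda>z. cost (fst z) r (snd z)
           + E (cond_pmf (joint_successor step k r) {w. fst w = snd z})
               (\<lambda>w. behav_cost_from cost (behav_of_mixed cost step)
                      (fst w, return_pmf (snd w)) rs))"
proof -
  define \<gamma> where "\<gamma> = move_coupling cost step k r"
  define J where "J = joint_successor step k r"
  define \<beta> where "\<beta> = behav_of_mixed cost step"
  define G where "G = (\<lambda>w. behav_cost_from cost \<beta> (fst w, return_pmf (snd w)) rs)"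
  have "x \<in> set_pmf (map_pmf fst \<gamma>)"
    using x move_coupling(1)[OF k] by (simp add: \<gamma>_def couplings_def)
  then have supp_\<gamma>: "set_pmf (cond_pmf \<gamma> {z. fst z = x}) = set_pmf \<gamma> \<inter> {z. fst z = x}"
    by (rule set_cond_pmf_fiber)
  have supp_J: "set_pmf (cond_pmf J {w. fst w = snd z}) = set_pmf J \<inter> {w. fst w = snd z}"
    if "z \<in> set_pmf \<gamma>" for z
    using move_coupling_snd[OF k that[unfolded \<gamma>_def]] by (simp add: J_def set_cond_pmf_fiber)
  have fin: "finite (set_pmf \<gamma>)" "finite (set_pmf J)"
    using move_coupling(3)[OF k] finite_joint_successor[OF k] by (simp_all add: \<gamma>_def J_def)
  have "behav_cost_from cost \<beta> (x, return_pmf k) (r # rs)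
      = E (\<beta> x (return_pmf k) r) (\<lambda>s'. cost x r (fst s') + behav_cost_from cost \<beta> s' rs)"
    unfolding \<beta>_def by (simp add: behav_cost_from_Cons[OF behavioral_alg_behav_of_mixed])
  also have "\<beta> x (return_pmf k) r = bind_pmf (cond_pmf \<gamma> {z. fst z = x})
      (\<lambda>z. map_pmf (\<lambda>w. (fst w, return_pmf (snd w))) (cond_pmf J {w. fst w = snd z}))"
    using k x by (simp add: \<beta>_def \<gamma>_def J_def behav_of_mixed_def)
  also have "E \<dots> (\<lambda>s'. cost x r (fst s') + behav_cost_from cost \<beta> s' rs)
      = E (cond_pmf \<gamma> {z. fst z = x})
          (\<lambda>z. E (cond_pmf J {w. fst w = snd z}) (\<lambda>w. cost x r (fst w) + G w))"
    using fin supp_\<gamma> supp_J by (subst E_bind) (auto simp: G_def)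
  also have "\<dots> = E (cond_pmf \<gamma> {z. fst z = x})
      (\<lambda>z. cost (fst z) r (snd z) + E (cond_pmf J {w. fst w = snd z}) G)"
  proof (rule E_cong)
    fix z assume "z \<in> set_pmf (cond_pmf \<gamma> {z. fst z = x})"
    then have z: "z \<in> set_pmf \<gamma>" "fst z = x"
      using supp_\<gamma> by auto
    then show "E (cond_pmf J {w. fst w = snd z}) (\<lambda>w. cost x r (fst w) + G w)
        = cost (fst z) r (snd z) + E (cond_pmf J {w. fst w = snd z}) G"
      using supp_J[OF z(1)] fin(2) by (subst E_const_add[symmetric]) (auto intro!: E_cong)
  qed
  finally show ?thesis
    by (simp add: \<beta>_def \<gamma>_def J_def G_def)
qed

lemma E_behav_cost_from_behav_of_mixed:
  assumes "fin_dist (fst k)"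
  shows "E (fst k) (\<lambda>x. behav_cost_from cost (behav_of_mixed cost step) (x, return_pmf k) rs)
           = mixed_cost_from cost step k rs"
  using assms
proof (induction rs arbitrary: k)
  case (Cons r rs)
  define \<gamma> where "\<gamma> = move_coupling cost step k r"
  define J where "J = joint_successor step k r"
  define G where
    "G = (\<lambda>w. behav_cost_from cost (behav_of_mixed cost step) (fst w, return_pmf (snd w)) rs)"
  define \<Psi> where "\<Psi> x' = E (cond_pmf J {w. fst w = x'}) G" for x'
  have \<gamma>: "map_pmf fst \<gamma> = fst k" "map_pmf snd \<gamma> = map_pmf fst J"
    using move_coupling(1)[OF Cons.prems]
    by (simp_all add: \<gamma>_def J_def couplings_def map_fst_joint_successor)
  have fin: "finite (set_pmf \<gamma>)" "finite (set_pmf J)"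
    using move_coupling(3)[OF Cons.prems] finite_joint_successor[OF Cons.prems]
    by (simp_all add: \<gamma>_def J_def)
  have "E (fst k) (\<lambda>x. behav_cost_from cost (behav_of_mixed cost step) (x, return_pmf k) (r # rs))
      = E (map_pmf fst \<gamma>)
          (\<lambda>x. E (cond_pmf \<gamma> {z. fst z = x}) (\<lambda>z. cost (fst z) r (snd z) + \<Psi> (snd z)))"
    unfolding \<gamma>(1) using Cons.prems
    by (intro E_cong) (simp add: behav_cost_from_behav_of_mixed_Cons \<gamma>_def J_def \<Psi>_def G_def)
  also have "\<dots> = E \<gamma> (\<lambda>z. cost (fst z) r (snd z) + \<Psi> (snd z))"
    using fin(1) by (rule E_total)
  also have "\<dots> = pmf_cost cost (fst k) r (bind_pmf (step k r) fst) + E (map_pmf fst J) \<Psi>"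
    using fin(1) move_coupling(2)[OF Cons.prems] by (simp add: E_add \<gamma>_def flip: \<gamma>(2))
  also have "E (map_pmf fst J) \<Psi> = E J G"
    unfolding \<Psi>_def using fin(2) by (rule E_total)
  also have "\<dots> = E (step k r)
      (\<lambda>k'. E (fst k')
         (\<lambda>x'. behav_cost_from cost (behav_of_mixed cost step) (x', return_pmf k') rs))"
    unfolding J_def G_def using Cons.prems by (simp add: E_joint_successor)
  also have "\<dots> = E (step k r) (\<lambda>k'. mixed_cost_from cost step k' rs)"
    using Cons.IH mixed_algD(2)[OF step Cons.prems] by (intro E_cong) simp
  finally show ?case
    using mixed_cost_from_Cons[OF step Cons.prems] by simp
qed simp

end

section \<open>Distributions over deterministic algorithms\<close>

lemma exists_image_prob_space:
  fixes F :: "'a \<Rightarrow> 'b" and g :: "'b \<Rightarrow> 'i \<Rightarrow> real"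
  assumes M: "prob_space M" and g: "\<And>i. (\<lambda>x. g (F x) i) \<in> borel_measurable M"
  shows "\<exists>N. prob_space N
           \<and> (\<forall>i. integrable N (\<lambda>y. g y i) \<longleftrightarrow> integrable M (\<lambda>x. g (F x) i))
           \<and> (\<forall>i. (\<integral>y. g y i \<partial>N) = (\<integral>x. g (F x) i \<partial>M))"
proof -
  define \<Sigma> where "\<Sigma> = measure_of UNIV {B. F -` B \<inter> space M \<in> sets M} (\<lambda>_. 0)"
  have F: "F \<in> measurable M \<Sigma>"
    unfolding \<Sigma>_def by (rule measurable_measure_of) auto
  have g_\<Sigma>: "(\<lambda>y. g y i) \<in> borel_measurable \<Sigma>" for i
  proof (rule measurableI)
    fix B :: "real set" assume "B \<in> sets borel"
    then have "F -` ((\<lambda>y. g y i) -` B) \<inter> space M \<in> sets M"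
      using measurable_sets[OF g] by (simp add: vimage_def)
    then show "(\<lambda>y. g y i) -` B \<inter> space \<Sigma> \<in> sets \<Sigma>"
      unfolding \<Sigma>_def by (auto simp: space_measure_of_conv)
  qed (simp add: \<Sigma>_def space_measure_of_conv)
  show ?thesis
  proof (intro exI conjI allI)
    show "prob_space (distr M \<Sigma> F)"
      using M F by (rule prob_space.prob_space_distr)
    show "integrable (distr M \<Sigma> F) (\<lambda>y. g y i) \<longleftrightarrow> integrable M (\<lambda>x. g (F x) i)" for i
      using F g_\<Sigma> by (rule integrable_distr_eq)
    show "(\<integral>y. g y i \<partial>distr M \<Sigma> F) = (\<integral>x. g (F x) i \<partial>M)" for i
      using F g_\<Sigma> by (rule integral_distr)
  qed
qed

definition choice_space :: "('x \<Rightarrow> 'b \<Rightarrow> 'r \<Rightarrow> ('x \<times> 'b) pmf)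
    \<Rightarrow> (('x \<times> 'b) \<times> 'r \<Rightarrow> 'x \<times> 'b) measure" where
  "choice_space \<beta> = PiM UNIV (\<lambda>(s, r). measure_pmf (\<beta> (fst s) (snd s) r))"

abbreviation seed_space :: "('x \<Rightarrow> 'b \<Rightarrow> 'r \<Rightarrow> ('x \<times> 'b) pmf)
    \<Rightarrow> (('x \<times> 'b) \<times> 'r \<Rightarrow> 'x \<times> 'b) stream measure" where
  "seed_space \<beta> \<equiv> stream_space (choice_space \<beta>)"

text \<open>Redirecting choices outside the support (a null set) makes the chosen state a
  measurable function with finite range.\<close>
definition chosen_state :: "('x \<Rightarrow> 'b \<Rightarrow> 'r \<Rightarrow> ('x \<times> 'b) pmf) \<Rightarrow> (('x \<times> 'b) \<times> 'r \<Rightarrow> 'x \<times> 'b)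
    \<Rightarrow> 'x \<times> 'b \<Rightarrow> 'r \<Rightarrow> 'x \<times> 'b" where
  "chosen_state \<beta> c s r = (if c (s, r) \<in> set_pmf (\<beta> (fst s) (snd s) r) then c (s, r)
                      else (SOME y. y \<in> set_pmf (\<beta> (fst s) (snd s) r)))"

fun seeded_run :: "('x \<Rightarrow> 'b \<Rightarrow> 'r \<Rightarrow> ('x \<times> 'b) pmf) \<Rightarrow> (('x \<times> 'b) \<times> 'r \<Rightarrow> 'x \<times> 'b) stream
    \<Rightarrow> 'x \<times> 'b \<Rightarrow> 'r list \<Rightarrow> 'x \<times> 'b" where
  "seeded_run \<beta> X s [] = s"
| "seeded_run \<beta> X s (r # rs) = seeded_run \<beta> (stl X) (chosen_state \<beta> (shd X) s r) rs"

fun seeded_trace :: "('x \<Rightarrow> 'b \<Rightarrow> 'r \<Rightarrow> ('x \<times> 'b) pmf) \<Rightarrow> (('x \<times> 'b) \<times> 'r \<Rightarrow> 'x \<times> 'b) stream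
    \<Rightarrow> 'x \<times> 'b \<Rightarrow> 'r list \<Rightarrow> ('x \<times> 'b) list" where
  "seeded_trace \<beta> X s [] = []"
| "seeded_trace \<beta> X s (r # rs) =
     chosen_state \<beta> (shd X) s r # seeded_trace \<beta> (stl X) (chosen_state \<beta> (shd X) s r) rs"

definition seeded_cost :: "('x \<Rightarrow> 'r \<Rightarrow> 'x \<Rightarrow> real) \<Rightarrow> ('x \<Rightarrow> 'b \<Rightarrow> 'r \<Rightarrow> ('x \<times> 'b) pmf)
    \<Rightarrow> 'x \<times> 'b \<Rightarrow> 'r list \<Rightarrow> (('x \<times> 'b) \<times> 'r \<Rightarrow> 'x \<times> 'b) stream \<Rightarrow> real" where
  "seeded_cost cost \<beta> s rs X = path_cost cost (fst s) rs (map fst (seeded_trace \<beta> X s rs))"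

lemma seeded_cost_Nil [simp]: "seeded_cost cost \<beta> s [] X = 0"
  by (simp add: seeded_cost_def)

lemma seeded_cost_Cons:
  "seeded_cost cost \<beta> s (r # rs) X
     = cost (fst s) r (fst (chosen_state \<beta> (shd X) s r))
       + seeded_cost cost \<beta> (chosen_state \<beta> (shd X) s r) rs (stl X)"
  by (simp add: seeded_cost_def)

lemma seeded_cost_nonneg: "(\<And>u r v. 0 \<le> cost u r v) \<Longrightarrow> 0 \<le> seeded_cost cost \<beta> s rs X"
  unfolding seeded_cost_def by (rule path_cost_nonneg)

lemma map_seeded_run_prefixes:
  "map (\<lambda>t. seeded_run \<beta> X s (take t rs)) [1..<Suc (length rs)] = seeded_trace \<beta> X s rs"
proof (induction rs arbitrary: X s)
  case (Cons r rs)
  have "[1..<Suc (length (r # rs))] = 1 # map Suc [1..<Suc (length rs)]"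
    by (simp add: upt_conv_Cons map_Suc_upt del: upt_Suc)
  then show ?case
    using Cons.IH by (simp del: upt_Suc add: o_def)
qed simp

lemma det_cost_seeded_run:
  "det_cost cost (fst s) (\<lambda>rs. fst (seeded_run \<beta> X s rs)) rs = seeded_cost cost \<beta> s rs X"
  unfolding det_cost_def seeded_cost_def map_seeded_run_prefixes[symmetric] by (simp add: o_def)

lemma prob_space_choice_space: "prob_space (choice_space \<beta>)"
  unfolding choice_space_def by (auto intro: prob_space_PiM prob_space_measure_pmf)

lemma measurable_choice_space_component:
  "(\<lambda>c. c (s, r)) \<in> measurable (choice_space \<beta>) (measure_pmf (\<beta> (fst s) (snd s) r))"
  unfolding choice_space_def
  using measurable_component_singleton[of "(s, r)" UNIV
      "\<lambda>(s, r). measure_pmf (\<beta> (fst s) (snd s) r)"]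
  by simp

lemma nn_integral_choice_space_component:
  "(\<integral>\<^sup>+c. f (c (s, r)) \<partial>choice_space \<beta>) = (\<integral>\<^sup>+y. f y \<partial>measure_pmf (\<beta> (fst s) (snd s) r))"
proof -
  have "(\<integral>\<^sup>+c. f (c (s, r)) \<partial>choice_space \<beta>)
      = (\<integral>\<^sup>+y. f y \<partial>distr (choice_space \<beta>) (measure_pmf (\<beta> (fst s) (snd s) r)) (\<lambda>c. c (s, r)))"
    by (rule nn_integral_distr[symmetric, OF measurable_choice_space_component]) simp
  also have "distr (choice_space \<beta>) (measure_pmf (\<beta> (fst s) (snd s) r)) (\<lambda>c. c (s, r))
      = measure_pmf (\<beta> (fst s) (snd s) r)"
    unfolding choice_space_def
    using distr_PiM_component[of UNIV "\<lambda>(s, r). measure_pmf (\<beta> (fst s) (snd s) r)" "(s, r)"]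
    by (simp add: case_prod_beta prob_space_measure_pmf)
  finally show ?thesis .
qed

context
  fixes \<beta> :: "'x \<Rightarrow> 'b \<Rightarrow> 'r \<Rightarrow> ('x \<times> 'b) pmf"
  assumes \<beta>: "behavioral_alg \<beta>"
begin

lemma measurable_chosen_state:
  "(\<lambda>X. chosen_state \<beta> (shd X) s r)
     \<in> measurable (seed_space \<beta>) (count_space (set_pmf (\<beta> (fst s) (snd s) r)))"
proof -
  have "(\<lambda>y. chosen_state \<beta> (\<lambda>_. y) s r)
      \<in> measurable (measure_pmf (\<beta> (fst s) (snd s) r))
           (count_space (set_pmf (\<beta> (fst s) (snd s) r)))"
    by (auto simp: chosen_state_def some_in_eq set_pmf_not_empty)
  then have "(\<lambda>X. chosen_state \<beta> (\<lambda>_. shd X (s, r)) s r)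
      \<in> measurable (seed_space \<beta>) (count_space (set_pmf (\<beta> (fst s) (snd s) r)))"
    by (rule measurable_compose[OF
          measurable_compose[OF measurable_shd measurable_choice_space_component]])
  then show ?thesis
    by (simp add: chosen_state_def)
qed

lemma measurable_seeded_cost: "seeded_cost cost \<beta> s rs \<in> borel_measurable (seed_space \<beta>)"
proof (induction rs arbitrary: s)
  case Nil
  have "seeded_cost cost \<beta> s [] = (\<lambda>_. 0)"
    by (rule ext) simp
  then show ?case by simp
next
  case (Cons r rs)
  have "(\<lambda>X. (\<lambda>s' X. cost (fst s) r (fst s') + seeded_cost cost \<beta> s' rs (stl X))
            (chosen_state \<beta> (shd X) s r) X)
      \<in> borel_measurable (seed_space \<beta>)"
  proof (rule measurable_compose_countable'[OF _ measurable_chosen_state])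
    show "countable (set_pmf (\<beta> (fst s) (snd s) r))"
      using \<beta> by (auto simp: behavioral_alg_def intro: countable_finite)
  qed (intro borel_measurable_add borel_measurable_const
      measurable_compose[OF measurable_stl Cons.IH])
  then show ?case
    by (simp add: seeded_cost_Cons)
qed

lemma nn_integral_seeded_cost:
  assumes nn: "\<And>u r v. 0 \<le> cost u r v"
  shows "(\<integral>\<^sup>+X. seeded_cost cost \<beta> s rs X \<partial>seed_space \<beta>) = behav_cost_from cost \<beta> s rs"
proof (induction rs arbitrary: s)
  case (Cons r rs)
  interpret L: prob_space "choice_space \<beta>"
    by (rule prob_space_choice_space)
  interpret S: prob_space "seed_space \<beta>"
    by (rule L.prob_space_stream_space)
  define H where "H = (\<lambda>y. cost (fst s) r (fst y) + behav_cost_from cost \<beta> y rs)"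
  have H_nonneg: "0 \<le> H y" for y
    unfolding H_def by (intro add_nonneg_nonneg nn behav_cost_from_nonneg)
  have "(\<integral>\<^sup>+X. seeded_cost cost \<beta> s (r # rs) X \<partial>seed_space \<beta>)
      = (\<integral>\<^sup>+c. (\<integral>\<^sup>+X. seeded_cost cost \<beta> s (r # rs) (c ## X) \<partial>seed_space \<beta>) \<partial>choice_space \<beta>)"
    by (rule L.nn_integral_stream_space)
      (intro measurable_compose[OF measurable_seeded_cost] measurable_ennreal)
  also have "\<dots> = (\<integral>\<^sup>+c. H (chosen_state \<beta> c s r) \<partial>choice_space \<beta>)"
  proof (rule nn_integral_cong)
    fix c
    have "(\<integral>\<^sup>+X. seeded_cost cost \<beta> s (r # rs) (c ## X) \<partial>seed_space \<beta>)
        = (\<integral>\<^sup>+X. ennreal (cost (fst s) r (fst (chosen_state \<beta> c s r)))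
             + ennreal (seeded_cost cost \<beta> (chosen_state \<beta> c s r) rs X) \<partial>seed_space \<beta>)"
      by (intro nn_integral_cong) (simp add: seeded_cost_Cons nn seeded_cost_nonneg)
    also have "\<dots> = ennreal (H (chosen_state \<beta> c s r))"
      by (subst nn_integral_add)
        (auto intro: measurable_compose[OF measurable_seeded_cost]
          simp: Cons.IH S.emeasure_space_1 H_def nn behav_cost_from_nonneg)
    finally show "(\<integral>\<^sup>+X. seeded_cost cost \<beta> s (r # rs) (c ## X) \<partial>seed_space \<beta>)
        = ennreal (H (chosen_state \<beta> c s r))" .
  qed
  also have "\<dots> = (\<integral>\<^sup>+y. H (chosen_state \<beta> (\<lambda>_. y) s r) \<partial>measure_pmf (\<beta> (fst s) (snd s) r))"
    using nn_integral_choice_space_component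
        [where f = "\<lambda>y. ennreal (H (chosen_state \<beta> (\<lambda>_. y) s r))"]
    by (simp add: chosen_state_def)
  also have "\<dots> = (\<integral>\<^sup>+y. H y \<partial>measure_pmf (\<beta> (fst s) (snd s) r))"
    by (intro nn_integral_cong_AE) (simp add: AE_measure_pmf_iff chosen_state_def)
  also have "\<dots> = E (\<beta> (fst s) (snd s) r) H"
    using \<beta> H_nonneg
    by (intro nn_integral_eq_integral integrable_measure_pmf_finite) (auto simp: behavioral_alg_def)
  also have "\<dots> = behav_cost_from cost \<beta> s (r # rs)"
    by (simp add: behav_cost_from_Cons[OF \<beta>] H_def)
  finally show ?case .
qed simp

lemma random_det_alg_of_behavioral:
  assumes nn: "\<And>u r v. 0 \<le> cost u r v"
  shows "\<exists>M. random_det_alg cost s0 M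
           \<and> (\<forall>rs. random_det_exp_cost cost s0 M rs = behav_exp_cost cost s0 b0 \<beta> rs)"
proof -
  interpret S: prob_space "seed_space \<beta>"
    by (rule prob_space.prob_space_stream_space[OF prob_space_choice_space])
  define F where "F X rs = fst (seeded_run \<beta> X (s0, b0) rs)" for X rs
  have det_cost_F: "det_cost cost s0 (F X) rs = seeded_cost cost \<beta> (s0, b0) rs X" for X rs
    unfolding F_def using det_cost_seeded_run[of cost "(s0, b0)"] by simp
  have "\<exists>M. prob_space M
      \<and> (\<forall>rs. integrable M (\<lambda>A. det_cost cost s0 A rs)
                \<longleftrightarrow> integrable (seed_space \<beta>) (\<lambda>X. det_cost cost s0 (F X) rs))
      \<and> (\<forall>rs. (\<integral>A. det_cost cost s0 A rs \<partial>M) = (\<integral>X. det_cost cost s0 (F X) rs \<partial>seed_space \<beta>))"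
    by (rule exists_image_prob_space)
      (simp_all add: det_cost_F measurable_seeded_cost S.prob_space_axioms)
  then obtain M where M: "prob_space M"
    and int_M: "\<And>rs. integrable M (\<lambda>A. det_cost cost s0 A rs)
                  \<longleftrightarrow> integrable (seed_space \<beta>) (seeded_cost cost \<beta> (s0, b0) rs)"
    and exp_M: "\<And>rs. (\<integral>A. det_cost cost s0 A rs \<partial>M)
                  = (\<integral>X. seeded_cost cost \<beta> (s0, b0) rs X \<partial>seed_space \<beta>)"
    by (auto simp: det_cost_F)
  have "integrable (seed_space \<beta>) (seeded_cost cost \<beta> (s0, b0) rs)" for rs
    by (intro integrableI_nonneg measurable_seeded_cost)
      (simp_all add: nn_integral_seeded_cost nn seeded_cost_nonneg)
  moreover have "(\<integral>X. seeded_cost cost \<beta> (s0, b0) rs X \<partial>seed_space \<beta>)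
      = behav_exp_cost cost s0 b0 \<beta> rs" for rs
  proof -
    have "(\<integral>X. seeded_cost cost \<beta> (s0, b0) rs X \<partial>seed_space \<beta>)
        = enn2real (\<integral>\<^sup>+X. seeded_cost cost \<beta> (s0, b0) rs X \<partial>seed_space \<beta>)"
      by (intro integral_eq_nn_integral measurable_seeded_cost) (simp add: nn seeded_cost_nonneg)
    also have "\<dots> = behav_cost_from cost \<beta> (s0, b0) rs"
      by (simp add: nn_integral_seeded_cost nn behav_cost_from_nonneg)
    finally show ?thesis
      by (simp add: behav_exp_cost_def behav_cost_from_def)
  qed
  ultimately show ?thesis
    using M int_M exp_M by (auto simp: random_det_alg_def random_det_exp_cost_def)
qed

end


lemma competitive_mono:
  assumes "competitive C cost s0 f" and "\<And>rs. g rs \<le> f rs"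
  shows "competitive C cost s0 g"
  using assms unfolding competitive_def by (meson order_trans)

theorem mainTheorem3:
  fixes d :: "'x \<Rightarrow> 'x \<Rightarrow> real"
    and cost :: "'x \<Rightarrow> 'r \<Rightarrow> 'x \<Rightarrow> real"
    and s0 :: 'x
    and C :: real
    and step :: "('x pmf \<times> 'm) \<Rightarrow> 'r \<Rightarrow> ('x pmf \<times> 'm) pmf"
    and m0 :: 'm
  assumes "online_problem d cost"
    and "C \<ge> 0"
    and "mixed_alg step"
    and "competitive C cost s0 (mixed_exp_cost cost s0 m0 step)"
  shows "(\<exists>M. random_det_alg cost s0 M \<and> competitive C cost s0 (random_det_exp_cost cost s0 M))
       \<and> (\<exists>(\<beta> :: 'x \<Rightarrow> ('x pmf \<times> 'm) pmf \<Rightarrow> 'r \<Rightarrow> ('x \<times> ('x pmf \<times> 'm) pmf) pmf) b0.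
            behavioral_alg \<beta> \<and> competitive C cost s0 (behav_exp_cost cost s0 b0 \<beta>))
       \<and> (\<exists>(\<delta> :: 'x pmf \<Rightarrow> ('x pmf \<times> 'm) pmf \<Rightarrow> 'r \<Rightarrow> ('x pmf \<times> ('x pmf \<times> 'm) pmf)) b0.
            distributional_alg \<delta> \<and> competitive C cost s0 (distr_cost cost s0 b0 \<delta>))"
proof -
  \<comment> \<open>Each constructed algorithm costs at most the mixed one on every request sequence.\<close>
  have nn: "\<And>u r v. 0 \<le> cost u r v"
    using assms(1) by (simp add: online_problem_def)
  define k0 where "k0 = (return_pmf s0, m0)"
  have k0: "fin_dist (fst k0)"
    by (simp add: k0_def fin_dist_def)
  have mixed: "mixed_exp_cost cost s0 m0 step = mixed_cost_from cost step k0"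
    by (simp add: fun_eq_iff mixed_exp_cost_def mixed_cost_from_def k0_def)
  have behav: "behav_exp_cost cost s0 (return_pmf k0) (behav_of_mixed cost step) rs
      = mixed_cost_from cost step k0 rs" for rs
    using E_behav_cost_from_behav_of_mixed[OF assms(3) k0, of cost rs]
    by (simp add: behav_exp_cost_def behav_cost_from_def k0_def)
  have distr: "distr_cost cost s0 (return_pmf k0) (distr_of_mixed step) rs
      \<le> mixed_cost_from cost step k0 rs" for rs
    using distr_cost_from_distr_of_mixed_le[OF assms(3), of "return_pmf k0" cost rs] k0
    by (simp add: distr_cost_def k0_def bind_return_pmf)
  obtain M where M: "random_det_alg cost s0 M"
    and det: "\<And>rs. random_det_exp_cost cost s0 M rs
                = behav_exp_cost cost s0 (return_pmf k0) (behav_of_mixed cost step) rs"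
    using random_det_alg_of_behavioral[where cost = cost,
        OF behavioral_alg_behav_of_mixed[OF assms(3)] nn]
    by blast
  have "competitive C cost s0 (mixed_cost_from cost step k0)"
    using assms(4) by (simp add: mixed)
  then show ?thesis
    using M behavioral_alg_behav_of_mixed[OF assms(3)]
      distributional_alg_distr_of_mixed[OF assms(3)]
    by (blast intro: competitive_mono eq_refl det behav distr)
qed

end
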